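(* Let $k$ be a non-archimedean local field of residue characteristic $2$, with ring of integers $\mathfrak o$ and normalized valuation $\operatorname{ord}$. Let $B(x)=\sum_{i=1}^n a_i x_i^2$ be a diagonal quadratic form on $k^n$ with coefficients $a_i\in k$ satisfying $0\le \operatorname{ord} a_i\le 1$ for all $i$, and suppose $B$ is anisotropic over $k$. Then for every nonzero $x\in k^n$, \[ \max_i |a_i x_i^2| \;\ge\; |B(x)| \;\ge\; \max_i |4 a_i x_i^2| . \]
   Context: $|\cdot|$ is the normalized absolute value on $k$ ($|\varpi|=q^{-1}$ for a uniformizer $\varpi$, where $q$ is the cardinality of the residue field). A quadratic form is anisotropic if $B(x)=0$ only for $x=0$. *)

theory Defs
  imports Complex_Main
begin

text \<open>A non-archimedean local field is modelled as a field type 'a together with a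
normalized discrete valuation ord (only meaningful on nonzero elements; ord 0 plays the
role of +infinity and is never used), such that the field is complete w.r.t. ord and
the residue field is finite.\<close>

definition val_ring :: "('a::field \<Rightarrow> int) \<Rightarrow> 'a set" where
  "val_ring ord = {x. x = 0 \<or> 0 \<le> ord x}"

definition val_ideal :: "('a::field \<Rightarrow> int) \<Rightarrow> 'a set" where
  "val_ideal ord = {x. x = 0 \<or> 1 \<le> ord x}"

definition residue_field :: "('a::field \<Rightarrow> int) \<Rightarrow> 'a set set" where
  "residue_field ord =
     val_ring ord // {(x, y). x \<in> val_ring ord \<and> y \<in> val_ring ord \<and> x - y \<in> val_ideal ord}"

definition discrete_valuation :: "('a::field \<Rightarrow> int) \<Rightarrow> bool" where
  "discrete_valuation ord \<longleftrightarrow>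
     (\<forall>x y. x \<noteq> 0 \<longrightarrow> y \<noteq> 0 \<longrightarrow> ord (x * y) = ord x + ord y) \<and>
     (\<forall>x y. x \<noteq> 0 \<longrightarrow> y \<noteq> 0 \<longrightarrow> x + y \<noteq> 0 \<longrightarrow> min (ord x) (ord y) \<le> ord (x + y)) \<and>
     (\<exists>\<pi>. \<pi> \<noteq> 0 \<and> ord \<pi> = 1)"

definition val_cauchy :: "('a::field \<Rightarrow> int) \<Rightarrow> (nat \<Rightarrow> 'a) \<Rightarrow> bool" where
  "val_cauchy ord s \<longleftrightarrow>
     (\<forall>N::int. \<exists>M. \<forall>m\<ge>M. \<forall>n\<ge>M. s m - s n \<in> {x. x = 0 \<or> N \<le> ord x})"

definition val_converges :: "('a::field \<Rightarrow> int) \<Rightarrow> (nat \<Rightarrow> 'a) \<Rightarrow> 'a \<Rightarrow> bool" where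
  "val_converges ord s L \<longleftrightarrow>
     (\<forall>N::int. \<exists>M. \<forall>n\<ge>M. s n - L \<in> {x. x = 0 \<or> N \<le> ord x})"

definition nonarch_local_field :: "('a::field \<Rightarrow> int) \<Rightarrow> bool" where
  "nonarch_local_field ord \<longleftrightarrow>
     discrete_valuation ord \<and>
     (\<forall>s. val_cauchy ord s \<longrightarrow> (\<exists>L. val_converges ord s L)) \<and>
     finite (residue_field ord)"

definition residue_char_two :: "('a::field \<Rightarrow> int) \<Rightarrow> bool" where
  "residue_char_two ord \<longleftrightarrow> (2::'a) \<in> val_ideal ord"

definition nabs :: "('a::field \<Rightarrow> int) \<Rightarrow> 'a \<Rightarrow> real" where
  "nabs ord x = (if x = 0 then 0 else real (card (residue_field ord)) powi (- ord x))"

end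

theory Submission
  imports Defs
begin

text \<open>The upper bound is the ultrametric inequality. For the lower bound, suppose
  \<open>|B(x)| < |4 a\<^sub>j x\<^sub>j\<^sup>2|\<close> for some \<open>j\<close>. Then \<open>c = B(x) / (4 a\<^sub>j x\<^sub>j\<^sup>2)\<close> lies in the maximal ideal,
  and by completeness \<open>1 - 4c\<close> is a square \<open>s\<^sup>2\<close> with \<open>s = 1 + 2z\<close>, where \<open>z\<^sup>2 + z = -c\<close> is solved
  by the contracting iteration \<open>z \<mapsto> -c - z\<^sup>2\<close>. Replacing \<open>x\<^sub>j\<close> by \<open>s x\<^sub>j\<close> changes \<open>B(x)\<close> by
  \<open>a\<^sub>j x\<^sub>j\<^sup>2 (s\<^sup>2 - 1) = -B(x)\<close>, giving a nontrivial zero of \<open>B\<close>.\<close>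

definition val_ge :: "('a::field \<Rightarrow> int) \<Rightarrow> int \<Rightarrow> 'a \<Rightarrow> bool" where
  "val_ge ord N x \<longleftrightarrow> x = 0 \<or> N \<le> ord x"

definition val_complete :: "('a::field \<Rightarrow> int) \<Rightarrow> bool" where
  "val_complete ord \<longleftrightarrow> (\<forall>s. val_cauchy ord s \<longrightarrow> (\<exists>L. val_converges ord s L))"

lemma val_ge_0 [simp]: "val_ge ord N 0"
  by (simp add: val_ge_def)

lemma val_ge_mono: "M \<le> N \<Longrightarrow> val_ge ord N x \<Longrightarrow> val_ge ord M x"
  by (auto simp: val_ge_def)

lemma eq_0_if_val_ge_all: "(\<And>N. val_ge ord N x) \<Longrightarrow> x = 0"
  using val_ge_def[of ord "ord x + 1" x] by auto

lemma val_cauchy_iff: "val_cauchy ord s \<longleftrightarrow> (\<forall>N. \<exists>M. \<forall>m\<ge>M. \<forall>n\<ge>M. val_ge ord N (s m - s n))"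
  by (simp add: val_cauchy_def val_ge_def)

lemma val_converges_iff: "val_converges ord s L \<longleftrightarrow> (\<forall>N. \<exists>M. \<forall>n\<ge>M. val_ge ord N (s n - L))"
  by (simp add: val_converges_def val_ge_def)

context
  fixes ord :: "'a::field \<Rightarrow> int"
  assumes dv: "discrete_valuation ord"
begin

lemma ord_mult: "x \<noteq> 0 \<Longrightarrow> y \<noteq> 0 \<Longrightarrow> ord (x * y) = ord x + ord y"
  using dv unfolding discrete_valuation_def by blast

lemma ord_add_ge: "x \<noteq> 0 \<Longrightarrow> y \<noteq> 0 \<Longrightarrow> x + y \<noteq> 0 \<Longrightarrow> min (ord x) (ord y) \<le> ord (x + y)"
  using dv unfolding discrete_valuation_def by blast

lemma ord_one: "ord 1 = 0"
  using ord_mult[of 1 1] by simp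

lemma ord_uminus: "x \<noteq> 0 \<Longrightarrow> ord (- x) = ord x"
  using ord_mult[of "-1" "-1"] ord_mult[of "-1" x] ord_one by simp

lemma ord_inverse: "x \<noteq> 0 \<Longrightarrow> ord (inverse x) = - ord x"
  using ord_mult[of x "inverse x"] ord_one by simp

lemma val_ge_mult: "val_ge ord M x \<Longrightarrow> val_ge ord N y \<Longrightarrow> val_ge ord (M + N) (x * y)"
  unfolding val_ge_def by (metis add_mono ord_mult mult_eq_0_iff)

lemma val_ge_add: "val_ge ord N x \<Longrightarrow> val_ge ord N y \<Longrightarrow> val_ge ord N (x + y)"
  unfolding val_ge_def by (metis add.left_neutral add.right_neutral ord_add_ge min.bounded_iff order_trans)

lemma val_ge_uminus_iff [simp]: "val_ge ord N (- x) \<longleftrightarrow> val_ge ord N x"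
  unfolding val_ge_def by (metis ord_uminus neg_equal_0_iff_equal)

lemma val_ge_diff: "val_ge ord N x \<Longrightarrow> val_ge ord N y \<Longrightarrow> val_ge ord N (x - y)"
  using val_ge_add[of N x "- y"] by simp

lemma val_ge_diff_commute: "val_ge ord N (x - y) \<longleftrightarrow> val_ge ord N (y - x)"
  using val_ge_uminus_iff[of N "x - y"] by simp

lemma val_ge_of_nat: "val_ge ord 0 (of_nat k)"
proof (induction k)
  case (Suc k)
  have "val_ge ord 0 1" by (simp add: val_ge_def ord_one)
  from val_ge_add[OF this Suc] show ?case by simp
qed simp

lemma val_cauchy_if_steps:
  assumes step: "\<And>k. val_ge ord (int k + 1) (s (Suc k) - s k)"
  shows "val_cauchy ord s"
proof -
  have tail: "val_ge ord (int m + 1) (s (m + p) - s m)" for m p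
  proof (induction p)
    case (Suc p)
    have "val_ge ord (int m + 1) (s (Suc (m + p)) - s (m + p))"
      by (rule val_ge_mono[OF _ step]) simp
    from val_ge_add[OF this Suc] show ?case by simp
  qed simp
  have ordered: "val_ge ord N (s m - s n)" if "nat N \<le> n" "n \<le> m" for N m n
  proof -
    obtain p where "m = n + p" using \<open>n \<le> m\<close> le_Suc_ex by blast
    with tail[of n p] \<open>nat N \<le> n\<close> show ?thesis
      by (intro val_ge_mono[of N "int n + 1"]) auto
  qed
  show ?thesis
    unfolding val_cauchy_iff
    by (metis ordered val_ge_diff_commute nle_le)
qed

text \<open>Solving \<open>z\<^sup>2 + z = d\<close> by the iteration \<open>z\<^sub>k\<^sub>+\<^sub>1 = d - z\<^sub>k\<^sup>2\<close>: since
  \<open>z\<^sub>k\<^sub>+\<^sub>2 - z\<^sub>k\<^sub>+\<^sub>1 = -(z\<^sub>k\<^sub>+\<^sub>1 - z\<^sub>k)(z\<^sub>k\<^sub>+\<^sub>1 + z\<^sub>k)\<close> with the second factor in the maximal ideal,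
  consecutive differences gain one order of valuation per step.\<close>

lemma artin_schreier_root:
  assumes compl: "val_complete ord" and d: "val_ge ord 1 d"
  shows "\<exists>z. z\<^sup>2 + z = d \<and> val_ge ord 1 z"
proof -
  define z :: "nat \<Rightarrow> 'a" where "z = rec_nat 0 (\<lambda>_ w. d - w\<^sup>2)"
  have z0: "z 0 = 0" and zS: "\<And>k. z (Suc k) = d - (z k)\<^sup>2" by (simp_all add: z_def)
  have z_ideal: "val_ge ord 1 (z k)" for k
  proof (induction k)
    case (Suc k)
    have "val_ge ord 1 ((z k)\<^sup>2)"
      using val_ge_mult[OF Suc Suc] by (simp add: power2_eq_square val_ge_mono[of 1 2])
    then show ?case unfolding zS by (rule val_ge_diff[OF d])
  qed (simp add: z0)
  have z_step: "val_ge ord (int k + 1) (z (Suc k) - z k)" for k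
  proof (induction k)
    case (Suc k)
    have "z (Suc (Suc k)) - z (Suc k) = - ((z (Suc k) - z k) * (z (Suc k) + z k))"
      by (simp add: zS power2_eq_square algebra_simps)
    with val_ge_mult[OF Suc val_ge_add[OF z_ideal z_ideal]] show ?case
      by (simp add: add.commute)
  qed (simp add: z0 zS d)
  obtain L where L: "\<forall>N. \<exists>M. \<forall>n\<ge>M. val_ge ord N (z n - L)"
    using compl val_cauchy_if_steps[OF z_step] unfolding val_complete_def val_converges_iff by blast
  have L_ideal: "val_ge ord 1 L"
  proof -
    obtain M where "val_ge ord 1 (z M - L)" using L by blast
    from val_ge_diff[OF z_ideal[of M] this] show ?thesis by simp
  qed
  have "val_ge ord N (L\<^sup>2 + L - d)" for N
  proof -
    define N' where "N' = max N 1"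
    obtain M where M: "\<forall>n\<ge>M. val_ge ord N' (z n - L)" using L by blast
    have "val_ge ord (N' + 1) ((L - z M) * (L + z M))"
      using M val_ge_mult[OF _ val_ge_add[OF L_ideal z_ideal]] val_ge_diff_commute by blast
    then have "val_ge ord N' ((L - z M) * (L + z M) + (L - z (Suc M)))"
      using M val_ge_diff_commute by (intro val_ge_add) (auto intro: val_ge_mono[rotated])
    moreover have "(L - z M) * (L + z M) + (L - z (Suc M)) = L\<^sup>2 + L - d"
      by (simp add: zS power2_eq_square algebra_simps)
    ultimately show ?thesis by (metis N'_def max.cobounded1 val_ge_mono)
  qed
  then have "L\<^sup>2 + L - d = 0" by (rule eq_0_if_val_ge_all)
  with L_ideal show ?thesis by (intro exI[of _ L]) simp
qed

lemma sqrt_one_minus_four_mult: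
  assumes compl: "val_complete ord" and c: "val_ge ord 1 c"
  shows "\<exists>s. s \<noteq> 0 \<and> s\<^sup>2 = 1 - 4 * c"
proof -
  obtain z where z: "z\<^sup>2 + z = - c" and z_ideal: "val_ge ord 1 z"
    using artin_schreier_root[OF compl, of "- c"] c by auto
  have "(1 + 2 * z)\<^sup>2 = 1 + 4 * (z\<^sup>2 + z)" by (simp add: power2_eq_square algebra_simps)
  moreover have "1 + 2 * z \<noteq> 0"
  proof
    assume "1 + 2 * z = 0"
    moreover have "val_ge ord 1 (2 * z)"
      using val_ge_mult[OF val_ge_of_nat[of 2] z_ideal] by simp
    ultimately have "val_ge ord 1 (1::'a)"
      by (metis add_eq_0_iff val_ge_uminus_iff)
    then show False by (simp add: val_ge_def ord_one)
  qed
  ultimately show ?thesis using z by (intro exI[of _ "1 + 2 * z"]) simp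
qed

end

lemma card_residue_field_ge_1:
  assumes "finite (residue_field ord)"
  shows "1 \<le> card (residue_field ord)"
proof -
  have "(0::'a::field) \<in> val_ring ord" by (simp add: val_ring_def)
  then have "residue_field ord \<noteq> {}" unfolding residue_field_def quotient_def by blast
  with assms show ?thesis by (simp add: Suc_le_eq card_gt_0_iff)
qed

lemma nabs_nonneg: "0 \<le> nabs ord x"
  by (simp add: nabs_def)

lemma nabs_antimono:
  assumes "finite (residue_field ord)" "x \<noteq> 0" "y \<noteq> 0" "ord y \<le> ord x"
  shows "nabs ord x \<le> nabs ord y"
  using assms card_residue_field_ge_1[of ord] by (simp add: nabs_def power_int_increasing)

lemma nabs_add_le:
  assumes dv: "discrete_valuation ord" and fin: "finite (residue_field ord)"
    and "nabs ord x \<le> M" "nabs ord y \<le> M" "0 \<le> M"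
  shows "nabs ord (x + y) \<le> M"
proof (cases "x = 0 \<or> y = 0 \<or> x + y = 0")
  case True
  with assms show ?thesis by (auto simp: nabs_def)
next
  case False
  with ord_add_ge[OF dv] have "min (ord x) (ord y) \<le> ord (x + y)" by blast
  with False assms nabs_antimono[OF fin, of "x + y"] show ?thesis
    by (cases "ord x \<le> ord y") fastforce+
qed

lemma nabs_sum_le_Max:
  assumes dv: "discrete_valuation ord" and fin: "finite (residue_field ord)"
    and A: "finite A" "A \<noteq> {}"
  shows "nabs ord (sum f A) \<le> (MAX i\<in>A. nabs ord (f i))"
proof -
  let ?M = "MAX i\<in>A. nabs ord (f i)"
  have "0 \<le> ?M" using A nabs_nonneg by (auto simp: Max_ge_iff)
  have "nabs ord (sum f B) \<le> ?M" if "B \<subseteq> A" for B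
    using finite_subset[OF that A(1)] that
  proof (induction B rule: finite_induct)
    case empty
    with \<open>0 \<le> ?M\<close> show ?case by (simp add: nabs_def)
  next
    case (insert i B)
    with A \<open>0 \<le> ?M\<close> show ?case by (auto intro!: nabs_add_le[OF dv fin])
  qed
  then show ?thesis by blast
qed

lemma diag_form_rescale:
  fixes a x :: "nat \<Rightarrow> 'a::comm_ring_1"
  assumes "j < n"
  shows "(\<Sum>i<n. a i * ((x(j := s * x j)) i)\<^sup>2)
       = (\<Sum>i<n. a i * (x i)\<^sup>2) + a j * (x j)\<^sup>2 * (s\<^sup>2 - 1)"
proof -
  have "a i * ((x(j := s * x j)) i)\<^sup>2
      = a i * (x i)\<^sup>2 + (if i = j then a j * (x j)\<^sup>2 * (s\<^sup>2 - 1) else 0)" for i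
    by (simp add: power2_eq_square algebra_simps)
  with assms show ?thesis by (simp add: sum.distrib)
qed

lemma anisotropic_diag_form_ge:
  fixes ord :: "'a::field \<Rightarrow> int" and a x :: "nat \<Rightarrow> 'a" and n :: nat
  assumes dv: "discrete_valuation ord" and compl: "val_complete ord"
    and fin: "finite (residue_field ord)"
    and aniso: "\<forall>y. (\<Sum>i<n. a i * (y i)\<^sup>2) = 0 \<longrightarrow> (\<forall>i<n. y i = 0)"
    and j: "j < n"
  shows "nabs ord (4 * a j * (x j)\<^sup>2) \<le> nabs ord (\<Sum>i<n. a i * (x i)\<^sup>2)"
proof (cases "4 * a j * (x j)\<^sup>2 = 0")
  case True
  then show ?thesis by (simp add: nabs_def)
next
  case False
  define S where "S = (\<Sum>i<n. a i * (x i)\<^sup>2)"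
  define T where "T = a j * (x j)\<^sup>2"
  have T4: "4 * T \<noteq> 0" using False by (simp add: T_def mult.assoc)
  have "S \<noteq> 0 \<and> ord S \<le> ord (4 * T)"
  proof (rule ccontr)
    assume "\<not> ?thesis"
    then have "val_ge ord (ord (4 * T) + 1) S" by (auto simp: val_ge_def)
    moreover have "val_ge ord (- ord (4 * T)) (inverse (4 * T))"
      using ord_inverse[OF dv T4] by (simp add: val_ge_def)
    ultimately have "val_ge ord 1 (S * inverse (4 * T))"
      using val_ge_mult[OF dv] by fastforce
    then obtain s where "s \<noteq> 0" and s2: "s\<^sup>2 = 1 - 4 * (S * inverse (4 * T))"
      using sqrt_one_minus_four_mult[OF dv compl] by blast
    have "(\<Sum>i<n. a i * ((x(j := s * x j)) i)\<^sup>2) = S + T * (s\<^sup>2 - 1)"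
      using diag_form_rescale[OF j] by (simp add: S_def T_def)
    also have "\<dots> = S - 4 * T * inverse (4 * T) * S"
      by (simp add: s2 algebra_simps)
    also have "\<dots> = 0"
      using T4 by simp
    finally have "\<forall>i<n. (x(j := s * x j)) i = 0"
      using aniso by blast
    with j \<open>s \<noteq> 0\<close> False show False by auto
  qed
  with False show ?thesis
    unfolding S_def T_def by (intro nabs_antimono[OF fin]) (auto simp: mult.assoc)
qed

theorem lemma2p1:
  fixes ord :: "'a::field \<Rightarrow> int" and a :: "nat \<Rightarrow> 'a" and n :: nat and x :: "nat \<Rightarrow> 'a"
  assumes "nonarch_local_field ord"
    and "residue_char_two ord"
    and coeff: "\<forall>i<n. a i \<noteq> 0 \<and> 0 \<le> ord (a i) \<and> ord (a i) \<le> 1"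
    and aniso: "\<forall>y :: nat \<Rightarrow> 'a. (\<Sum>i<n. a i * (y i)\<^sup>2) = 0 \<longrightarrow> (\<forall>i<n. y i = 0)"
    and x_nz: "\<exists>i<n. x i \<noteq> 0"
  shows "(MAX i\<in>{..<n}. nabs ord (a i * (x i)\<^sup>2)) \<ge> nabs ord (\<Sum>i<n. a i * (x i)\<^sup>2)
       \<and> nabs ord (\<Sum>i<n. a i * (x i)\<^sup>2) \<ge> (MAX i\<in>{..<n}. nabs ord (4 * a i * (x i)\<^sup>2))"
proof
  have dv: "discrete_valuation ord" and compl: "val_complete ord"
    and fin: "finite (residue_field ord)"
    using assms(1) unfolding nonarch_local_field_def val_complete_def by auto
  have ne: "{..<n} \<noteq> {}" using x_nz by auto
  show "nabs ord (\<Sum>i<n. a i * (x i)\<^sup>2) \<le> (MAX i\<in>{..<n}. nabs ord (a i * (x i)\<^sup>2))"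
    using nabs_sum_le_Max[OF dv fin _ ne] by simp
  show "(MAX i\<in>{..<n}. nabs ord (4 * a i * (x i)\<^sup>2)) \<le> nabs ord (\<Sum>i<n. a i * (x i)\<^sup>2)"
    using ne anisotropic_diag_form_ge[OF dv compl fin aniso] by (simp add: Max_le_iff)
qed

end
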